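(* Let $I\subseteq R$ be a good ideal and let $Q\in\mathbb N$. Then there exists an integer $L(Q)$ such that for every $l\ge L(Q)$ and every $m\in G(I^l)$ there is an index $i\in\{1,\dots,n\}$ with $m=m'\mu_i^Q$ for some $m'\in G(I^{l-Q})$.
   Context: Let $\mathbb K$ be a field, $R=\mathbb K[x_1,\dots,x_n]$, $\mathfrak m=\langle x_1,\dots,x_n\rangle$, $\mathbb N=\{0,1,2,\dots\}$. A monomial $x_1^{\alpha_1}\cdots x_n^{\alpha_n}$ is identified with the point $(\alpha_1,\dots,\alpha_n)\in\mathbb N^n$. For a monomial ideal $I$, $G(I)$ denotes its (unique) minimal monomial generating set. If $I$ is an $\mathfrak m$-primary monomial ideal, then for each $i$ there is a unique $d_i\ge1$ with $x_i^{d_i}\in G(I)$; write $\mu_i=x_i^{d_i}$. For $(a_1,\dots,a_n)\in\mathbb N^n$ the box associated to $I$ is $B_{a_1,\dots,a_n}=([a_1d_1,(a_1+1)d_1]\times\cdots\times[a_nd_n,(a_n+1)d_n])\cap\mathbb N^n$; a monomial belongs to a box if its exponent vector does. An $\mathfrak m$-primary monomial ideal $I$ is called good if for every integer $l\ge1$, every element of $G(I^l)$ belongs to some box $B_{a_1,\dots,a_n}$ with $a_1+\dots+a_n=l-1$. *)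

theory Defs
  imports Main "HOL-Library.Function_Algebras"
begin

text \<open>Monomials of R = K[x_1,...,x_n] are identified with exponent vectors
  'v \<Rightarrow> nat, where the finite type 'v indexes the variables x_1,...,x_n.
  A monomial ideal is identified with the set of (exponent vectors of) monomials
  it contains; this is an upward closed set w.r.t. divisibility, which is the
  pointwise order on exponent vectors.\<close>

definition mono_ideal :: "('v \<Rightarrow> nat) set \<Rightarrow> bool" where
  "mono_ideal I \<longleftrightarrow> (\<forall>a\<in>I. \<forall>b. a \<le> b \<longrightarrow> b \<in> I)"

definition gens :: "('v \<Rightarrow> nat) set \<Rightarrow> ('v \<Rightarrow> nat) set" where
  "gens I = {a \<in> I. \<forall>b\<in>I. b \<le> a \<longrightarrow> b = a}"

definition ideal_prod :: "('v \<Rightarrow> nat) set \<Rightarrow> ('v \<Rightarrow> nat) set \<Rightarrow> ('v \<Rightarrow> nat) set" where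
  "ideal_prod I J = {c. \<exists>a\<in>I. \<exists>b\<in>J. a + b \<le> c}"

fun ideal_pow :: "('v \<Rightarrow> nat) set \<Rightarrow> nat \<Rightarrow> ('v \<Rightarrow> nat) set" where
  "ideal_pow I 0 = UNIV"
| "ideal_pow I (Suc l) = ideal_prod I (ideal_pow I l)"

definition ppow :: "'v \<Rightarrow> nat \<Rightarrow> ('v \<Rightarrow> nat)" where
  "ppow i d = (\<lambda>j. if j = i then d else 0)"

definition m_primary :: "('v \<Rightarrow> nat) set \<Rightarrow> bool" where
  "m_primary I \<longleftrightarrow> mono_ideal I \<and> 0 \<notin> I \<and> (\<forall>i. \<exists>d. ppow i d \<in> I)"

text \<open>d_i: the unique d with x_i^d in G(I), i.e. the least d with x_i^d in I.\<close>
definition pdeg :: "('v \<Rightarrow> nat) set \<Rightarrow> 'v \<Rightarrow> nat" where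
  "pdeg I i = (LEAST d. ppow i d \<in> I)"

definition mu :: "('v \<Rightarrow> nat) set \<Rightarrow> 'v \<Rightarrow> ('v \<Rightarrow> nat)" where
  "mu I i = ppow i (pdeg I i)"

definition in_box :: "('v \<Rightarrow> nat) set \<Rightarrow> ('v \<Rightarrow> nat) \<Rightarrow> ('v \<Rightarrow> nat) \<Rightarrow> bool" where
  "in_box I a m \<longleftrightarrow> (\<forall>i. a i * pdeg I i \<le> m i \<and> m i \<le> (a i + 1) * pdeg I i)"

definition good :: "('v::finite \<Rightarrow> nat) set \<Rightarrow> bool" where
  "good I \<longleftrightarrow> m_primary I \<and>
     (\<forall>l\<ge>1. \<forall>m\<in>gens (ideal_pow I l). \<exists>a. (\<Sum>i\<in>UNIV. a i) = l - 1 \<and> in_box I a m)"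

end

theory Submission
  imports Defs "HOL-Library.FuncSet"
begin

text \<open>Goodness forces every \<open>u \<in> I\<close> to satisfy \<open>\<Sum>j. u\<^sub>j / d\<^sub>j \<ge> 1\<close>. An element \<open>m\<close> of
  \<open>I\<^sup>l\<close> dominates a sum of \<open>l\<close> factors from \<open>I\<close>, which may be truncated into the first box,
  so only finitely many factors occur. With \<open>D = \<Prod>i. d\<^sub>i\<close>, \<open>D\<close> copies of a factor \<open>g\<close> have
  the exponent vector of \<open>g\<^sub>j D / d\<^sub>j\<close> copies of each \<open>\<mu>\<^sub>j\<close>, at least \<open>D\<close> pure powers in
  total. After these exchanges fewer than \<open>D\<close> copies of each factor remain, so for large \<open>l\<close>
  some \<open>\<mu>\<^sub>i\<close> is used at least \<open>Q\<close> times; removing \<open>\<mu>\<^sub>i\<^sup>Q\<close> leaves an element of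
  \<open>I\<^bsup>l - Q\<^esup>\<close> below \<open>m - Q \<mu>\<^sub>i\<close>, and minimality of \<open>m\<close> makes \<open>m - Q \<mu>\<^sub>i\<close> a minimal generator.\<close>

lemma ideal_pow_upward: "x \<in> ideal_pow I a \<Longrightarrow> x \<le> y \<Longrightarrow> y \<in> ideal_pow I a"
  by (cases a) (auto simp: ideal_prod_def intro: order_trans)

lemma ideal_pow_add:
  "x \<in> ideal_pow I a \<Longrightarrow> y \<in> ideal_pow I b \<Longrightarrow> x + y \<in> ideal_pow I (a + b)"
proof (induction a arbitrary: x)
  case 0
  then show ?case by (auto intro: ideal_pow_upward simp: le_fun_def)
next
  case (Suc a)
  then obtain g z where g: "g \<in> I" "z \<in> ideal_pow I a" "g + z \<le> x"
    by (auto simp: ideal_prod_def)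
  have "z + y \<in> ideal_pow I (a + b)" using Suc.IH[OF g(2)] Suc.prems(2) by blast
  moreover have "g + (z + y) \<le> x + y" using g(3) by (auto simp: le_fun_def)
  ultimately have "x + y \<in> ideal_prod I (ideal_pow I (a + b))"
    unfolding ideal_prod_def using g(1) by blast
  then show ?case by (simp only: add_Suc ideal_pow.simps)
qed

lemma ideal_pow_Suc_subset: "ideal_pow I (Suc k) \<subseteq> ideal_pow I k"
proof
  fix x assume "x \<in> ideal_pow I (Suc k)"
  then obtain g z where "z \<in> ideal_pow I k" "g + z \<le> x"
    by (auto simp: ideal_prod_def)
  moreover from \<open>g + z \<le> x\<close> have "z \<le> x" by (auto simp: le_fun_def elim: add_leE)
  ultimately show "x \<in> ideal_pow I k" using ideal_pow_upward by blast
qed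

lemma ideal_pow_antimono: "a \<le> b \<Longrightarrow> ideal_pow I b \<subseteq> ideal_pow I a"
  by (rule lift_Suc_antimono_le[of "ideal_pow I"]) (rule ideal_pow_Suc_subset)

lemma mult_mem_ideal_pow: "g \<in> I \<Longrightarrow> (\<lambda>j. k * g j) \<in> ideal_pow I k"
proof (induction k)
  case (Suc k)
  have "g + (\<lambda>j. k * g j) \<le> (\<lambda>j. Suc k * g j)" by (auto simp: le_fun_def)
  then show ?case using Suc by (auto simp: ideal_prod_def)
qed simp

lemma sum_mem_ideal_pow:
  assumes "finite S" "\<And>s. s \<in> S \<Longrightarrow> f s \<in> ideal_pow I (a s)"
  shows "(\<lambda>j. \<Sum>s\<in>S. f s j) \<in> ideal_pow I (\<Sum>s\<in>S. a s)"
  using assms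
proof (induction S rule: finite_induct)
  case (insert x F)
  have "f x + (\<lambda>j. \<Sum>s\<in>F. f s j) \<in> ideal_pow I (a x + (\<Sum>s\<in>F. a s))"
    using insert by (intro ideal_pow_add) auto
  then show ?case using insert by (simp add: plus_fun_def)
qed simp

lemma ideal_pow_ge_sum_list:
  "m \<in> ideal_pow I l \<Longrightarrow>
     \<exists>xs. length xs = l \<and> set xs \<subseteq> I \<and> (\<forall>j. (\<Sum>x\<leftarrow>xs. x j) \<le> m j)"
proof (induction l arbitrary: m)
  case (Suc l)
  then obtain g z where g: "g \<in> I" "z \<in> ideal_pow I l" "g + z \<le> m"
    by (auto simp: ideal_prod_def)
  then obtain xs where xs: "length xs = l" "set xs \<subseteq> I" "\<forall>j. (\<Sum>x\<leftarrow>xs. x j) \<le> z j"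
    using Suc.IH by blast
  have "\<forall>j. (\<Sum>x\<leftarrow>g # xs. x j) \<le> m j"
    using xs(3) g(3) by (auto simp: le_fun_def intro: order_trans[rotated])
  then show ?case using xs g by (intro exI[of _ "g # xs"]) auto
qed simp

lemma ex_gens_le:
  fixes J :: "('v::finite \<Rightarrow> nat) set"
  assumes "u \<in> J"
  shows "\<exists>g\<in>gens J. g \<le> u"
proof -
  obtain g where g: "g \<in> J" "g \<le> u"
    and least: "\<And>y. y \<in> J \<Longrightarrow> y \<le> u \<Longrightarrow> sum g UNIV \<le> sum y UNIV"
    using ex_has_least_nat[of "\<lambda>v. v \<in> J \<and> v \<le> u" u "\<lambda>v. sum v UNIV"] assms by auto
  have "b = g" if "b \<in> J" "b \<le> g" for b
  proof (rule ccontr)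
    assume "b \<noteq> g"
    with \<open>b \<le> g\<close> obtain j where "b j < g j" by (auto simp: le_fun_def order_less_le)
    with \<open>b \<le> g\<close> have "sum b UNIV < sum g UNIV"
      by (intro sum_strict_mono_ex1) (auto simp: le_fun_def)
    with least[of b] that g(2) show False by (meson order_trans not_le)
  qed
  with g show ?thesis by (auto simp: gens_def)
qed

lemma finite_le_fun: "finite {g :: 'v::finite \<Rightarrow> nat. g \<le> d}"
proof (rule finite_subset)
  show "{g. g \<le> d} \<subseteq> PiE UNIV (\<lambda>j. {..d j})"
    by (auto simp: PiE_def Pi_def le_fun_def)
qed (intro finite_PiE, auto)

lemma m_primary_mu_mem: "m_primary I \<Longrightarrow> mu I i \<in> I"
  unfolding m_primary_def mu_def pdeg_def by (metis LeastI_ex)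

lemma m_primary_pdeg_pos: "m_primary I \<Longrightarrow> 0 < pdeg I i"
proof (rule ccontr)
  assume "m_primary I" "\<not> 0 < pdeg I i"
  then have "mu I i = 0" by (auto simp: mu_def ppow_def fun_eq_iff)
  with \<open>m_primary I\<close> show False using m_primary_mu_mem[of I i] by (simp add: m_primary_def)
qed

lemma pure_powers_mem_ideal_pow:
  fixes I :: "('v::finite \<Rightarrow> nat) set"
  assumes "m_primary I"
  shows "(\<lambda>j. e j * pdeg I j) \<in> ideal_pow I (\<Sum>j\<in>UNIV. e j)"
proof -
  have "(\<lambda>j. e j * pdeg I j) = (\<lambda>j. \<Sum>k\<in>UNIV. e k * mu I k j)"
    by (auto simp: mu_def ppow_def fun_eq_iff if_distrib cong: if_cong)
  also have "\<dots> \<in> ideal_pow I (\<Sum>j\<in>UNIV. e j)"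
    using assms by (intro sum_mem_ideal_pow mult_mem_ideal_pow m_primary_mu_mem) auto
  finally show ?thesis .
qed

text \<open>With \<open>D = \<Prod>i. d\<^sub>i\<close>, the weight \<open>W u = D \<Sum>j. u\<^sub>j / d\<^sub>j\<close> is integral, and \<open>D \<le> W u\<close>
  says that \<open>u\<close> lies on or above the hyperplane through the pure powers \<open>\<mu>\<^sub>i\<close>.\<close>

definition pdeg_prod :: "('v::finite \<Rightarrow> nat) set \<Rightarrow> nat" where
  "pdeg_prod I = (\<Prod>i\<in>UNIV. pdeg I i)"

definition pdeg_weight :: "('v::finite \<Rightarrow> nat) set \<Rightarrow> ('v \<Rightarrow> nat) \<Rightarrow> nat" where
  "pdeg_weight I u = (\<Sum>j\<in>UNIV. u j * (pdeg_prod I div pdeg I j))"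

lemma pdeg_prod_div_mult: "pdeg_prod I div pdeg I i * pdeg I i = pdeg_prod I"
proof -
  have "pdeg I i dvd pdeg_prod I" unfolding pdeg_prod_def by (rule dvd_prodI) auto
  then show ?thesis by simp
qed

lemma m_primary_pdeg_prod_pos: "m_primary I \<Longrightarrow> 0 < pdeg_prod I"
  by (simp add: pdeg_prod_def prod_pos m_primary_pdeg_pos)

lemma pdeg_weight_mult: "pdeg_weight I (\<lambda>j. k * u j) = k * pdeg_weight I u"
  by (simp add: pdeg_weight_def sum_distrib_left mult.assoc)

lemma pdeg_weight_mono: "u \<le> v \<Longrightarrow> pdeg_weight I u \<le> pdeg_weight I v"
  unfolding pdeg_weight_def by (intro sum_mono mult_right_mono) (auto simp: le_fun_def)

text \<open>The box of a generator of \<open>I\<^sup>k\<close> gives it weight at least \<open>(k - 1) D\<close>; applied to the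
  generator below \<open>k u\<close> with \<open>k = D + 1\<close> this forces \<open>W u \<ge> D\<close>.\<close>

lemma good_pdeg_weight_ge:
  assumes "good I" "u \<in> I"
  shows "pdeg_prod I \<le> pdeg_weight I u"
proof -
  define D where "D = pdeg_prod I"
  define k where "k = D + 1"
  have "(\<lambda>j. k * u j) \<in> ideal_pow I k" using assms(2) by (rule mult_mem_ideal_pow)
  then obtain g where g: "g \<in> gens (ideal_pow I k)" "g \<le> (\<lambda>j. k * u j)"
    using ex_gens_le by blast
  with assms(1) obtain a where a: "(\<Sum>i\<in>UNIV. a i) = D" "in_box I a g"
    unfolding good_def k_def by fastforce
  have "pdeg I j * (D div pdeg I j) = D" for j
    unfolding D_def using pdeg_prod_div_mult by (simp add: mult.commute)
  then have "(\<Sum>j\<in>UNIV. a j * pdeg I j * (D div pdeg I j)) = (\<Sum>j\<in>UNIV. a j) * D"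
    by (simp add: sum_distrib_right mult.assoc)
  then have "D * D = (\<Sum>j\<in>UNIV. a j * pdeg I j * (D div pdeg I j))"
    by (simp add: a(1))
  also have "\<dots> \<le> pdeg_weight I g" unfolding pdeg_weight_def D_def
    using a(2) by (intro sum_mono mult_right_mono) (auto simp: in_box_def)
  also have "\<dots> \<le> k * pdeg_weight I u"
    using pdeg_weight_mono[OF g(2)] by (simp add: pdeg_weight_mult)
  finally have "D * D \<le> (D + 1) * pdeg_weight I u" by (simp add: k_def)
  then show ?thesis unfolding D_def[symmetric]
  proof (rule contrapos_pp)
    assume "\<not> D \<le> pdeg_weight I u"
    then have "pdeg_weight I u + 1 \<le> D" by simp
    then have "(D + 1) * (pdeg_weight I u + 1) \<le> (D + 1) * D" by (rule mult_le_mono2)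
    then show "\<not> D * D \<le> (D + 1) * pdeg_weight I u" by (simp add: algebra_simps)
  qed
qed

definition first_box_elems :: "('v \<Rightarrow> nat) set \<Rightarrow> ('v \<Rightarrow> nat) set" where
  "first_box_elems I = {g \<in> I. g \<le> pdeg I}"

lemma finite_first_box_elems: "finite (first_box_elems (I :: ('v::finite \<Rightarrow> nat) set))"
  unfolding first_box_elems_def by (rule finite_subset[OF _ finite_le_fun]) auto

lemma m_primary_min_pdeg_mem:
  assumes "m_primary I" "x \<in> I"
  shows "(\<lambda>j. min (x j) (pdeg I j)) \<in> I"
proof (cases "\<exists>j. pdeg I j \<le> x j")
  case True
  then obtain j where "pdeg I j \<le> x j" by blast
  then have "mu I j \<le> (\<lambda>j. min (x j) (pdeg I j))" by (auto simp: le_fun_def mu_def ppow_def)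
  with m_primary_mu_mem[OF assms(1), of j] assms(1) show ?thesis
    unfolding m_primary_def mono_ideal_def by blast
next
  case False
  then have "(\<lambda>j. min (x j) (pdeg I j)) = x" by (simp add: fun_eq_iff min_def not_le less_imp_le)
  with assms(2) show ?thesis by simp
qed

lemma ideal_pow_ge_count_sum:
  fixes I :: "('v::finite \<Rightarrow> nat) set"
  assumes "m_primary I" "m \<in> ideal_pow I l"
  shows "\<exists>c. (\<Sum>g\<in>first_box_elems I. c g) = l \<and> (\<lambda>j. \<Sum>g\<in>first_box_elems I. c g * g j) \<le> m"
proof -
  define T where "T = first_box_elems I"
  define tr where "tr x = (\<lambda>j. min (x j) (pdeg I j))" for x :: "'v \<Rightarrow> nat"
  obtain xs where xs: "length xs = l" "set xs \<subseteq> I" "\<forall>j. (\<Sum>x\<leftarrow>xs. x j) \<le> m j"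
    using ideal_pow_ge_sum_list[OF assms(2)] by blast
  define ys where "ys = map tr xs"
  have ysT: "set ys \<subseteq> T"
    using xs(2) m_primary_min_pdeg_mem[OF assms(1)]
    by (auto simp: ys_def T_def tr_def first_box_elems_def le_fun_def)
  have finT: "finite T" unfolding T_def by (rule finite_first_box_elems)
  have "(\<Sum>g\<in>T. count_list ys g) = l"
    using sum_count_set[OF ysT finT] xs(1) by (simp add: ys_def)
  moreover have "(\<Sum>g\<in>T. count_list ys g * g j) \<le> m j" for j
  proof -
    have "(\<Sum>g\<in>T. count_list ys g * g j) = (\<Sum>x\<leftarrow>ys. x j)"
      using sum_list_map_eq_sum_count2[OF ysT finT, of "\<lambda>x. x j"] by simp
    also have "\<dots> \<le> (\<Sum>x\<leftarrow>xs. x j)"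
      unfolding ys_def by (simp add: o_def tr_def sum_list_mono)
    also have "\<dots> \<le> m j" using xs(3) by blast
    finally show ?thesis .
  qed
  ultimately show ?thesis unfolding T_def by (intro exI[of _ "count_list ys"]) (auto simp: le_fun_def)
qed

lemma count_sum_pure_power_exchange:
  fixes I :: "('v::finite \<Rightarrow> nat) set"
  assumes "m_primary I" "finite T" "T \<subseteq> I"
    and weight: "\<And>u. u \<in> T \<Longrightarrow> pdeg_prod I \<le> pdeg_weight I u"
  shows "\<exists>A k e. A \<in> ideal_pow I k \<and> k \<le> card T * pdeg_prod I \<and>
           (\<Sum>g\<in>T. c g) \<le> k + (\<Sum>j\<in>UNIV. e j) \<and>
           A + (\<lambda>j. e j * pdeg I j) = (\<lambda>j. \<Sum>g\<in>T. c g * g j)"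
proof (intro exI conjI)
  define D where "D = pdeg_prod I"
  define q where "q g = c g div D" for g
  define r where "r g = c g mod D" for g
  define e where "e j = (\<Sum>g\<in>T. q g * (g j * (D div pdeg I j)))" for j
  have D: "0 < D" "\<And>j. D div pdeg I j * pdeg I j = D"
    unfolding D_def using assms(1) by (auto intro: m_primary_pdeg_prod_pos pdeg_prod_div_mult)
  show "(\<lambda>j. \<Sum>g\<in>T. r g * g j) \<in> ideal_pow I (\<Sum>g\<in>T. r g)"
    using assms(2,3) by (intro sum_mem_ideal_pow mult_mem_ideal_pow) auto
  show "(\<Sum>g\<in>T. r g) \<le> card T * pdeg_prod I"
    using sum_bounded_above[of T r D] D(1) by (simp add: r_def D_def less_imp_le)
  have "D * (\<Sum>g\<in>T. q g) \<le> (\<Sum>g\<in>T. q g * pdeg_weight I g)"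
    unfolding sum_distrib_left using weight assms(3)
    by (intro sum_mono) (simp add: D_def mult.commute)
  also have "\<dots> = (\<Sum>j\<in>UNIV. e j)"
    unfolding e_def pdeg_weight_def D_def sum_distrib_left by (subst sum.swap) (simp add: mult_ac)
  finally have "D * (\<Sum>g\<in>T. q g) \<le> (\<Sum>j\<in>UNIV. e j)" .
  moreover have "(\<Sum>g\<in>T. c g) = (\<Sum>g\<in>T. r g) + D * (\<Sum>g\<in>T. q g)"
    unfolding q_def r_def sum_distrib_left sum.distrib[symmetric]
    by (simp add: mod_mult_div_eq)
  ultimately show "(\<Sum>g\<in>T. c g) \<le> (\<Sum>g\<in>T. r g) + (\<Sum>j\<in>UNIV. e j)" by linarith
  have "c g * g j = r g * g j + q g * (g j * (D div pdeg I j)) * pdeg I j" for g j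
    unfolding q_def r_def using D(2)[of j]
    by (metis add_mult_distrib mod_div_mult_eq mult.assoc mult.commute)
  then show "(\<lambda>j. \<Sum>g\<in>T. r g * g j) + (\<lambda>j. e j * pdeg I j) = (\<lambda>j. \<Sum>g\<in>T. c g * g j)"
    by (simp add: fun_eq_iff e_def sum_distrib_right sum.distrib)
qed

lemma ex_ge_of_card_mult_le_sum:
  fixes e :: "'v::finite \<Rightarrow> nat"
  assumes "card (UNIV :: 'v set) * Q \<le> (\<Sum>j\<in>UNIV. e j)"
  shows "\<exists>i. Q \<le> e i"
proof (rule ccontr)
  assume "\<not> (\<exists>i. Q \<le> e i)"
  then have "(\<Sum>j\<in>UNIV. e j) < (\<Sum>j\<in>(UNIV::'v set). Q)"
    by (intro sum_strict_mono) (auto simp: not_le)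
  with assms show False by simp
qed

lemma pure_power_factor_of_large_degree:
  fixes I :: "('v::finite \<Rightarrow> nat) set"
  assumes "m_primary I" and weight: "\<And>u. u \<in> I \<Longrightarrow> pdeg_prod I \<le> pdeg_weight I u"
    and large: "card (first_box_elems I) * pdeg_prod I + card (UNIV :: 'v set) * Q \<le> l"
    and "m \<in> ideal_pow I l"
  shows "\<exists>i. \<exists>m'\<in>ideal_pow I (l - Q). m' + (\<lambda>j. Q * mu I i j) \<le> m"
proof -
  define T where "T = first_box_elems I"
  obtain c where c: "(\<Sum>g\<in>T. c g) = l" "(\<lambda>j. \<Sum>g\<in>T. c g * g j) \<le> m"
    using ideal_pow_ge_count_sum[OF assms(1,4)] unfolding T_def by blast
  obtain A k e where A: "A \<in> ideal_pow I k" "k \<le> card T * pdeg_prod I" "l \<le> k + (\<Sum>j\<in>UNIV. e j)"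
    and Ae: "A + (\<lambda>j. e j * pdeg I j) = (\<lambda>j. \<Sum>g\<in>T. c g * g j)"
    using count_sum_pure_power_exchange[OF assms(1) finite_first_box_elems, of I c] weight
    unfolding T_def c(1)[symmetric] by (auto simp: first_box_elems_def)
  have "card (UNIV :: 'v set) * Q \<le> (\<Sum>j\<in>UNIV. e j)"
    using large A(2,3) unfolding T_def by linarith
  then obtain i where "Q \<le> e i" using ex_ge_of_card_mult_le_sum by blast
  define e' where "e' j = e j - (if j = i then Q else 0)" for j
  have e: "e j = e' j + (if j = i then Q else 0)" for j
    using \<open>Q \<le> e i\<close> by (simp add: e'_def)
  have "l - Q \<le> k + (\<Sum>j\<in>UNIV. e' j)"
    using A(3) unfolding e sum.distrib by simp
  then have "A + (\<lambda>j. e' j * pdeg I j) \<in> ideal_pow I (l - Q)"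
    using ideal_pow_antimono ideal_pow_add[OF A(1) pure_powers_mem_ideal_pow[OF assms(1)]] by blast
  moreover have "A + (\<lambda>j. e' j * pdeg I j) + (\<lambda>j. Q * mu I i j) = A + (\<lambda>j. e j * pdeg I j)"
    by (simp add: fun_eq_iff e mu_def ppow_def algebra_simps)
  then have "A + (\<lambda>j. e' j * pdeg I j) + (\<lambda>j. Q * mu I i j) \<le> m"
    using c(2) Ae by simp
  ultimately show ?thesis by blast
qed

lemma gens_ideal_pow_split:
  fixes I :: "('v::finite \<Rightarrow> nat) set"
  assumes "m \<in> gens (ideal_pow I l)" "Q \<le> l"
    and "m' \<in> ideal_pow I (l - Q)" "v \<in> ideal_pow I Q" "m' + v \<le> m"
  shows "\<exists>g\<in>gens (ideal_pow I (l - Q)). m = g + v"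
proof -
  obtain g where g: "g \<in> gens (ideal_pow I (l - Q))" "g \<le> m'"
    using ex_gens_le[OF assms(3)] by blast
  then have "g + v \<in> ideal_pow I (l - Q + Q)"
    using assms(4) by (auto simp: gens_def intro: ideal_pow_add)
  moreover have "g + v \<le> m"
    using g(2) assms(5) by (auto simp: le_fun_def intro: order_trans[rotated])
  ultimately have "m = g + v" using assms(1,2) by (auto simp: gens_def)
  with g(1) show ?thesis by blast
qed

theorem mainTheorem9:
  fixes I :: "('v::finite \<Rightarrow> nat) set" and Q :: nat
  assumes "good I"
  shows "\<exists>L::nat. \<forall>l\<ge>L. \<forall>m\<in>gens (ideal_pow I l).
           \<exists>i. \<exists>m'\<in>gens (ideal_pow I (l - Q)). m = m' + (\<lambda>j. Q * mu I i j)"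
proof -
  have I: "m_primary I" using assms by (simp add: good_def)
  define L where "L = card (first_box_elems I) * pdeg_prod I + card (UNIV :: 'v set) * Q"
  have "Q \<le> L" unfolding L_def by (simp add: Suc_le_eq card_gt_0_iff add_increasing)
  have "\<exists>i. \<exists>m'\<in>gens (ideal_pow I (l - Q)). m = m' + (\<lambda>j. Q * mu I i j)"
    if "L \<le> l" "m \<in> gens (ideal_pow I l)" for l m
  proof -
    have "m \<in> ideal_pow I l" using that(2) by (simp add: gens_def)
    with that(1) obtain i m' where "m' \<in> ideal_pow I (l - Q)" "m' + (\<lambda>j. Q * mu I i j) \<le> m"
      using pure_power_factor_of_large_degree[OF I good_pdeg_weight_ge[OF assms], of Q l m]
      unfolding L_def by blast
    moreover have "(\<lambda>j. Q * mu I i j) \<in> ideal_pow I Q"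
      using I by (intro mult_mem_ideal_pow m_primary_mu_mem)
    moreover have "Q \<le> l" using \<open>Q \<le> L\<close> that(1) by linarith
    ultimately show ?thesis using gens_ideal_pow_split[OF that(2)] by blast
  qed
  then show ?thesis by blast
qed

end
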